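(* Let $G$ be a cubic graph of order $n\ge 6$ and $A$ a cubic graph of order $4r$ ($r$ a positive integer). Then for any graph $G\circ A^-$, \[c_2(G\circ A^-)-\left\lceil\frac{|V(G\circ A^-)|+2}{4}\right\rceil\ge\left\lfloor\frac{n-2}{4}\right\rfloor.\]
   Context: Let $G$ and $A$ be $3$-regular graphs, let $a$ be a vertex of $A$ and $A^-=A-a$. A graph $G\circ A^-$ is any graph obtained by replacing each vertex $v$ of $G$ by a copy $A^-_v$ of $A^-$ and, for each edge $uv$ of $G$, adding an edge joining a vertex of degree $2$ of $A^-_u$ to a vertex of degree $2$ of $A^-_v$, so that each degree-$2$ vertex of each copy is incident with exactly one added edge (the choices of $a$ and of these edges are arbitrary). For a graph $H=(V,E)$ and $S_0\subseteq V$, the irreversible $2$-threshold conversion process sets $S_t=S_{t-1}\cup\{v: v \text{ has at least } 2 \text{ neighbours in } S_{t-1}\}$ for $t\ge1$; $S_0$ is a $2$-conversion set if $S_t=V$ for some $t$, and $c_2(H)$ is the minimum size of a $2$-conversion set. *)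

theory Defs
  imports Complex_Main
begin

definition simple_graph :: "'a set \<Rightarrow> ('a \<Rightarrow> 'a \<Rightarrow> bool) \<Rightarrow> bool" where
  "simple_graph V E \<longleftrightarrow> finite V \<and> (\<forall>x y. E x y \<longrightarrow> x \<in> V \<and> y \<in> V)
     \<and> (\<forall>x y. E x y \<longrightarrow> E y x) \<and> (\<forall>x. \<not> E x x)"

definition nbrs :: "('a \<Rightarrow> 'a \<Rightarrow> bool) \<Rightarrow> 'a \<Rightarrow> 'a set" where
  "nbrs E v = {w. E v w}"

definition cubic :: "'a set \<Rightarrow> ('a \<Rightarrow> 'a \<Rightarrow> bool) \<Rightarrow> bool" where
  "cubic V E \<longleftrightarrow> simple_graph V E \<and> (\<forall>v\<in>V. card (nbrs E v) = 3)"

definition conv_step :: "'a set \<Rightarrow> ('a \<Rightarrow> 'a \<Rightarrow> bool) \<Rightarrow> 'a set \<Rightarrow> 'a set" where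
  "conv_step V E S = S \<union> {v \<in> V. card (nbrs E v \<inter> S) \<ge> 2}"

definition is_2conv_set :: "'a set \<Rightarrow> ('a \<Rightarrow> 'a \<Rightarrow> bool) \<Rightarrow> 'a set \<Rightarrow> bool" where
  "is_2conv_set V E S0 \<longleftrightarrow> S0 \<subseteq> V \<and> (\<exists>t. (conv_step V E ^^ t) S0 = V)"

definition c2 :: "'a set \<Rightarrow> ('a \<Rightarrow> 'a \<Rightarrow> bool) \<Rightarrow> nat" where
  "c2 V E = (LEAST k. \<exists>S. is_2conv_set V E S \<and> card S = k)"

text \<open>H (on vertex set VG \<times> (VA - {a})) is a graph G \<circ> A^- built with removed vertex a:
  each copy {v} \<times> (VA - {a}) induces A - a; added edges only join degree-2 vertices
  (neighbours of a in A) of copies u, v with uv an edge of G; for each edge uv of G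
  exactly one added edge joins the two copies; and each degree-2 vertex of each copy
  is incident with exactly one added edge.\<close>
definition is_comp_graph ::
  "'g set \<Rightarrow> ('g \<Rightarrow> 'g \<Rightarrow> bool) \<Rightarrow> 'b set \<Rightarrow> ('b \<Rightarrow> 'b \<Rightarrow> bool) \<Rightarrow> 'b
    \<Rightarrow> ('g \<times> 'b \<Rightarrow> 'g \<times> 'b \<Rightarrow> bool) \<Rightarrow> bool" where
  "is_comp_graph VG EG VA EA a H \<longleftrightarrow>
     a \<in> VA \<and>
     (\<forall>p q. H p q \<longrightarrow> p \<in> VG \<times> (VA - {a}) \<and> q \<in> VG \<times> (VA - {a})) \<and>
     (\<forall>p q. H p q \<longrightarrow> H q p) \<and>
     (\<forall>v\<in>VG. \<forall>x\<in>VA - {a}. \<forall>y\<in>VA - {a}. H (v, x) (v, y) \<longleftrightarrow> EA x y) \<and>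
     (\<forall>u v x y. u \<noteq> v \<longrightarrow> H (u, x) (v, y) \<longrightarrow> EG u v \<and> EA a x \<and> EA a y) \<and>
     (\<forall>u v. EG u v \<longrightarrow> (\<exists>!(x, y). H (u, x) (v, y))) \<and>
     (\<forall>u\<in>VG. \<forall>x. EA a x \<longrightarrow> (\<exists>!(v, y). v \<noteq> u \<and> H (u, x) (v, y)))"

end

(*
  A non-seed vertex is converted when two of its neighbours already are, so in a graph of
  maximum degree 3 it has at most one neighbour converted at the same time or later. Ranking
  the non-seed vertices F of one copy of A - a by conversion time, the subgraph induced on F
  is therefore a forest. Counting the 3 |F| edge ends at F in A (at most 2 |F| - 2 inside F,
  at most 3 |S| towards the seeds S of the copy, at most 3 towards a) gives |F| <= 3 |S| + 1,
  and since |F| + |S| = 4r - 1 every copy contains at least r seeds. Hence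
  c2 >= nr = ceil((n (4r - 1) + 2) / 4) + floor((n - 2) / 4).
*)
theory Submission
  imports Defs
begin

text \<open>The LEAST is junk for vertices that are never converted.\<close>
definition conv_time :: "'a set \<Rightarrow> ('a \<Rightarrow> 'a \<Rightarrow> bool) \<Rightarrow> 'a set \<Rightarrow> 'a \<Rightarrow> nat" where
  "conv_time V E S p = (LEAST t. p \<in> (conv_step V E ^^ t) S)"

lemma conv_time_le:
  "p \<in> (conv_step V E ^^ t) S \<Longrightarrow> conv_time V E S p \<le> t"
  unfolding conv_time_def by (rule Least_le)

lemma mem_conv_step_funpow_conv_time:
  assumes "is_2conv_set V E S" and "p \<in> V"
  shows "p \<in> (conv_step V E ^^ conv_time V E S p) S"
proof -
  obtain T where "(conv_step V E ^^ T) S = V"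
    using assms(1) by (auto simp: is_2conv_set_def)
  then have "\<exists>t. p \<in> (conv_step V E ^^ t) S"
    using assms(2) by auto
  then show ?thesis
    unfolding conv_time_def by (rule LeastI_ex)
qed

lemma card_later_nbrs_le:
  assumes conv: "is_2conv_set V E S" and p: "p \<in> V - S" and fin: "finite (nbrs E p)"
  shows "card {q \<in> nbrs E p. conv_time V E S p \<le> conv_time V E S q} + 2 \<le> card (nbrs E p)"
proof -
  have reached: "p \<in> (conv_step V E ^^ conv_time V E S p) S"
    using mem_conv_step_funpow_conv_time[OF conv] p by blast
  have "conv_time V E S p \<noteq> 0"
  proof
    assume "conv_time V E S p = 0"
    with reached p show False by simp
  qed
  then obtain k where k: "conv_time V E S p = Suc k"
    using not0_implies_Suc by blast
  define St where "St = (conv_step V E ^^ k) S"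
  have "p \<in> conv_step V E St"
    using reached k by (simp add: St_def)
  moreover have "p \<notin> St"
    using k by (auto simp: St_def dest: conv_time_le)
  ultimately have converted: "2 \<le> card (nbrs E p \<inter> St)"
    by (simp add: conv_step_def)
  have "q \<notin> St" if "conv_time V E S p \<le> conv_time V E S q" for q
    using k that by (auto simp: St_def dest: conv_time_le)
  then have "{q \<in> nbrs E p. conv_time V E S p \<le> conv_time V E S q} \<subseteq> nbrs E p - St"
    by blast
  then have "card {q \<in> nbrs E p. conv_time V E S p \<le> conv_time V E S q} \<le> card (nbrs E p - St)"
    using fin by (intro card_mono) auto
  with converted card_Int_Diff[OF fin, of St] show ?thesis
    by linarith
qed

lemma le_c2I:
  assumes "\<And>S. is_2conv_set V E S \<Longrightarrow> k \<le> card S"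
  shows "k \<le> c2 V E"
proof -
  have "is_2conv_set V E V"
    unfolding is_2conv_set_def by (metis funpow_0 subset_refl)
  then have "\<exists>k S. is_2conv_set V E S \<and> card S = k"
    by blast
  then have "\<exists>S. is_2conv_set V E S \<and> card S = c2 V E"
    unfolding c2_def by (rule LeastI_ex)
  then obtain S where "is_2conv_set V E S" and "card S = c2 V E"
    by blast
  with assms show ?thesis
    by metis
qed

lemma card_adjacent_pairs_le_if_one_later_nbr:
  fixes \<tau> :: "'a \<Rightarrow> 'b::linorder"
  assumes "finite F" and "F \<noteq> {}" and sym: "symp R" and irrefl: "irreflp R"
    and "\<forall>w\<in>F. card {q \<in> F. R w q \<and> \<tau> w \<le> \<tau> q} \<le> 1"
  shows "card {(w, q). w \<in> F \<and> q \<in> F \<and> R w q} + 2 \<le> 2 * card F"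
  using assms(1,2,5)
proof (induction F rule: finite_remove_induct)
  case empty
  then show ?case by simp
next
  case (remove A)
  define P where "P B = {(w, q). w \<in> B \<and> q \<in> B \<and> R w q}" for B
  have fin_P: "finite (P B)" if "finite B" for B
    by (rule finite_subset[of _ "B \<times> B"]) (auto simp: P_def that)
  obtain m where m: "m \<in> A" and least: "\<And>x. x \<in> A \<Longrightarrow> \<tau> m \<le> \<tau> x"
    using ex_min_if_finite[of "\<tau> ` A"] remove.hyps(1,2) by fastforce
  txt \<open>All neighbours of a vertex of least rank are later, so removing it deletes at most one edge.\<close>
  define N where "N = {q \<in> A. R m q}"
  have "N = {q \<in> A. R m q \<and> \<tau> m \<le> \<tau> q}"
    using least by (auto simp: N_def)
  then have card_N: "card N \<le> 1"
    using remove.prems m by simp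
  have fin_N: "finite N"
    using remove.hyps(1) by (simp add: N_def)
  have "P A \<subseteq> P (A - {m}) \<union> Pair m ` N \<union> (\<lambda>q. (q, m)) ` N"
    using sym by (auto simp: P_def N_def symp_def)
  then have "card (P A) \<le> card (P (A - {m}) \<union> Pair m ` N \<union> (\<lambda>q. (q, m)) ` N)"
    using remove.hyps(1) fin_N fin_P by (intro card_mono) auto
  also have "\<dots> \<le> card (P (A - {m})) + card N + card N"
    using card_Un_le[of "P (A - {m}) \<union> Pair m ` N" "(\<lambda>q. (q, m)) ` N"]
      card_Un_le[of "P (A - {m})" "Pair m ` N"]
      card_image_le[OF fin_N, of "Pair m"] card_image_le[OF fin_N, of "\<lambda>q. (q, m)"]
    by linarith
  finally have step: "card (P A) \<le> card (P (A - {m})) + 2"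
    using card_N by linarith
  show ?case
  proof (cases "A - {m} = {}")
    case True
    then have "A = {m}"
      using m by blast
    then have "{(w, q). w \<in> A \<and> q \<in> A \<and> R w q} = {}"
      using irrefl unfolding irreflp_def by blast
    then have "card {(w, q). w \<in> A \<and> q \<in> A \<and> R w q} = 0"
      by (simp only: card.empty)
    moreover have "card A = 1"
      using \<open>A = {m}\<close> by simp
    ultimately show ?thesis
      by linarith
  next
    case False
    have "card {q \<in> A - {m}. R w q \<and> \<tau> w \<le> \<tau> q} \<le> 1" if "w \<in> A - {m}" for w
    proof -
      have "card {q \<in> A - {m}. R w q \<and> \<tau> w \<le> \<tau> q} \<le> card {q \<in> A. R w q \<and> \<tau> w \<le> \<tau> q}"
        using remove.hyps(1) by (intro card_mono) auto
      with remove.prems(2) that show ?thesis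
        by force
    qed
    then have "card (P (A - {m})) + 2 \<le> 2 * card (A - {m})"
      using remove.IH[OF m False] by (simp add: P_def)
    with step show ?thesis
      using remove.hyps(1) m by (simp add: P_def)
  qed
qed

lemma nbrs_subset_if_simple_graph:
  "simple_graph V E \<Longrightarrow> nbrs E x \<subseteq> V"
  by (auto simp: simple_graph_def nbrs_def)

lemma finite_nbrs_if_simple_graph:
  "simple_graph V E \<Longrightarrow> finite (nbrs E x)"
  using nbrs_subset_if_simple_graph by (metis finite_subset simple_graph_def)

lemma finite_if_cubic:
  "cubic V E \<Longrightarrow> finite V"
  by (simp add: cubic_def simple_graph_def)

lemma card_Sigma_nbrs_if_cubic:
  assumes "cubic V E" and "X \<subseteq> V"
  shows "card (Sigma X (nbrs E)) = 3 * card X"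
proof -
  have "finite X"
    using assms finite_if_cubic finite_subset by blast
  moreover have "finite (nbrs E x)" for x
    using assms(1) finite_nbrs_if_simple_graph by (auto simp: cubic_def)
  ultimately have "card (Sigma X (nbrs E)) = (\<Sum>x\<in>X. card (nbrs E x))"
    by simp
  also have "\<dots> = 3 * card X"
    using assms by (simp add: cubic_def subset_iff)
  finally show ?thesis .
qed

lemma card_le_if_one_later_nbr_in_cubic:
  fixes \<tau> :: "'a \<Rightarrow> 'b::linorder"
  assumes cubic: "cubic V E" and a: "a \<in> V" and F: "F \<subseteq> V - {a}"
    and later: "\<forall>w\<in>F. card {q \<in> F. E w q \<and> \<tau> w \<le> \<tau> q} \<le> 1"
  shows "card F \<le> 3 * card (V - {a} - F) + 1"
proof (cases "F = {}")
  case True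
  then show ?thesis by simp
next
  case False
  define S where "S = V - {a} - F"
  define inner where "inner = {(w, q). w \<in> F \<and> q \<in> F \<and> E w q}"
  have graph: "simple_graph V E"
    using cubic by (simp add: cubic_def)
  then have "symp E" and "irreflp E"
    by (auto simp: simple_graph_def symp_def irreflp_def)
  have "F \<subseteq> V" and "S \<subseteq> V"
    using F by (auto simp: S_def)
  have deg_a: "card (nbrs E a) = 3"
    using cubic a by (simp add: cubic_def)
  have fin_F: "finite F" and fin_S: "finite S"
    using F finite_if_cubic[OF cubic] finite_subset by (auto simp: S_def)
  have fin_Sigma: "finite (Sigma X (nbrs E))" if "finite X" for X
    using that finite_nbrs_if_simple_graph[OF graph] by blast
  have fin_inner: "finite inner"
    by (rule finite_subset[of _ "F \<times> F"]) (auto simp: inner_def fin_F)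
  have "Sigma F (nbrs E) \<subseteq> inner \<union> prod.swap ` Sigma S (nbrs E) \<union> (\<lambda>q. (q, a)) ` nbrs E a"
    using nbrs_subset_if_simple_graph[OF graph] \<open>symp E\<close>
    by (fastforce simp: S_def inner_def nbrs_def symp_def)
  then have "card (Sigma F (nbrs E))
      \<le> card (inner \<union> prod.swap ` Sigma S (nbrs E) \<union> (\<lambda>q. (q, a)) ` nbrs E a)"
    using fin_inner fin_Sigma[OF fin_S] finite_nbrs_if_simple_graph[OF graph]
    by (intro card_mono) auto
  also have "\<dots> \<le> card inner + card (Sigma S (nbrs E)) + card (nbrs E a)"
    using card_Un_le[of "inner \<union> prod.swap ` Sigma S (nbrs E)" "(\<lambda>q. (q, a)) ` nbrs E a"]
      card_Un_le[of inner "prod.swap ` Sigma S (nbrs E)"]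
      card_image_le[OF fin_Sigma[OF fin_S], of prod.swap]
      card_image_le[OF finite_nbrs_if_simple_graph[OF graph, of a], of "\<lambda>q. (q, a)"]
    by linarith
  finally have "3 * card F \<le> card inner + 3 * card S + 3"
    using card_Sigma_nbrs_if_cubic[OF cubic \<open>F \<subseteq> V\<close>] card_Sigma_nbrs_if_cubic[OF cubic \<open>S \<subseteq> V\<close>]
      deg_a by linarith
  moreover have "card inner + 2 \<le> 2 * card F"
    unfolding inner_def
    by (rule card_adjacent_pairs_le_if_one_later_nbr[OF fin_F False \<open>symp E\<close> \<open>irreflp E\<close> later])
  ultimately show ?thesis
    unfolding S_def by linarith
qed

lemma is_comp_graphD:
  assumes "is_comp_graph VG EG VA EA a H"
  shows "H (u, x) (v, y) \<Longrightarrow> y \<in> VA - {a}"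
    and "v \<in> VG \<Longrightarrow> x \<in> VA - {a} \<Longrightarrow> y \<in> VA - {a} \<Longrightarrow> H (v, x) (v, y) \<longleftrightarrow> EA x y"
    and "u \<noteq> v \<Longrightarrow> H (u, x) (v, y) \<Longrightarrow> EA a x"
    and "u \<in> VG \<Longrightarrow> EA a x \<Longrightarrow> \<exists>!(v, y). v \<noteq> u \<and> H (u, x) (v, y)"
  using assms unfolding is_comp_graph_def by simp_all

lemma nbrs_comp_graph_subset:
  assumes comp: "is_comp_graph VG EG VA EA a H" and u: "u \<in> VG" and x: "x \<in> VA - {a}"
  shows "nbrs H (u, x) \<subseteq> Pair u ` (nbrs EA x - {a}) \<union> {(v, y). v \<noteq> u \<and> H (u, x) (v, y)}"
proof
  fix p
  assume p: "p \<in> nbrs H (u, x)"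
  obtain v y where p_eq: "p = (v, y)"
    by fastforce
  show "p \<in> Pair u ` (nbrs EA x - {a}) \<union> {(v, y). v \<noteq> u \<and> H (u, x) (v, y)}"
  proof (cases "v = u")
    case True
    then have "H (u, x) (u, y)"
      using p p_eq by (simp add: nbrs_def)
    then have "y \<in> VA - {a}" and "EA x y"
      using is_comp_graphD(1,2)[OF comp] u x by blast+
    then show ?thesis
      using p_eq True by (auto simp: nbrs_def)
  next
    case False
    then show ?thesis
      using p p_eq by (simp add: nbrs_def)
  qed
qed

lemma card_nbrs_comp_graph_le:
  assumes cubic: "cubic VA EA" and comp: "is_comp_graph VG EG VA EA a H"
    and u: "u \<in> VG" and x: "x \<in> VA - {a}"
  shows "finite (nbrs H (u, x))" and "card (nbrs H (u, x)) \<le> 3"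
proof -
  define X where "X = {(v, y). v \<noteq> u \<and> H (u, x) (v, y)}"
  have graph: "simple_graph VA EA" and deg: "card (nbrs EA x) = 3"
    using cubic x by (auto simp: cubic_def)
  have fin: "finite (nbrs EA x - {a})"
    using finite_nbrs_if_simple_graph[OF graph] by blast
  have "finite X \<and> card (nbrs EA x - {a}) + card X \<le> 3"
  proof (cases "EA a x")
    case True
    then have "a \<in> nbrs EA x"
      using graph by (simp add: simple_graph_def nbrs_def)
    then have "card (nbrs EA x - {a}) = 2"
      using deg fin by simp
    moreover have "\<exists>!p. p \<in> X"
      using is_comp_graphD(4)[OF comp u True] by (simp add: X_def)
    then have "card X = 1"
      using card_1_singleton_iff by fastforce
    ultimately show ?thesis
      using card.infinite by fastforce
  next
    case False
    then have "\<not> (v \<noteq> u \<and> H (u, x) (v, y))" for v y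
      using is_comp_graphD(3)[OF comp, of u v x y] by auto
    then have "X = {}"
      by (auto simp: X_def)
    then show ?thesis
      using deg card_Diff1_le[of "nbrs EA x" a] by simp
  qed
  then have fin_cover: "finite (Pair u ` (nbrs EA x - {a}) \<union> X)"
    and card_cover: "card (Pair u ` (nbrs EA x - {a}) \<union> X) \<le> 3"
    using fin card_image_le[OF fin, of "Pair u"] card_Un_le[of "Pair u ` (nbrs EA x - {a})" X]
    by simp_all
  have cover: "nbrs H (u, x) \<subseteq> Pair u ` (nbrs EA x - {a}) \<union> X"
    unfolding X_def by (rule nbrs_comp_graph_subset[OF comp u x])
  show "finite (nbrs H (u, x))"
    by (rule finite_subset[OF cover fin_cover])
  show "card (nbrs H (u, x)) \<le> 3"
    using card_mono[OF fin_cover cover] card_cover by linarith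
qed

lemma card_seeds_in_copy_ge:
  assumes cubic: "cubic VA EA" and card_VA: "card VA = 4 * r"
    and comp: "is_comp_graph VG EG VA EA a H"
    and conv: "is_2conv_set (VG \<times> (VA - {a})) H S" and v: "v \<in> VG"
  shows "r \<le> card {x \<in> VA - {a}. (v, x) \<in> S}"
proof -
  define F where "F = {x \<in> VA - {a}. (v, x) \<notin> S}"
  define \<tau> where "\<tau> x = conv_time (VG \<times> (VA - {a})) H S (v, x)" for x
  have later: "card {q \<in> F. EA w q \<and> \<tau> w \<le> \<tau> q} \<le> 1" if w: "w \<in> F" for w
  proof -
    define N where "N = {p \<in> nbrs H (v, w). \<tau> w \<le> conv_time (VG \<times> (VA - {a})) H S p}"
    have w': "w \<in> VA - {a}" and non_seed: "(v, w) \<in> VG \<times> (VA - {a}) - S"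
      using v w by (auto simp: F_def)
    have "card N + 2 \<le> card (nbrs H (v, w))"
      unfolding N_def \<tau>_def
      by (rule card_later_nbrs_le[OF conv non_seed card_nbrs_comp_graph_le(1)[OF cubic comp v w']])
    then have "card N \<le> 1"
      using card_nbrs_comp_graph_le(2)[OF cubic comp v w'] by linarith
    moreover have "card (Pair v ` {q \<in> F. EA w q \<and> \<tau> w \<le> \<tau> q}) \<le> card N"
    proof (rule card_mono)
      show "finite N"
        using card_nbrs_comp_graph_le(1)[OF cubic comp v w'] by (simp add: N_def)
      show "Pair v ` {q \<in> F. EA w q \<and> \<tau> w \<le> \<tau> q} \<subseteq> N"
        using is_comp_graphD(2)[OF comp v w'] by (auto simp: F_def nbrs_def \<tau>_def N_def)
    qed
    moreover have "card (Pair v ` {q \<in> F. EA w q \<and> \<tau> w \<le> \<tau> q}) = card {q \<in> F. EA w q \<and> \<tau> w \<le> \<tau> q}"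
      by (rule card_image) (simp add: inj_on_def)
    ultimately show ?thesis
      by linarith
  qed
  have a: "a \<in> VA"
    using comp by (simp add: is_comp_graph_def)
  have "F \<subseteq> VA - {a}" and seeds: "VA - {a} - F = {x \<in> VA - {a}. (v, x) \<in> S}"
    by (auto simp: F_def)
  then have "card F \<le> 3 * card (VA - {a} - F) + 1"
    using later by (intro card_le_if_one_later_nbr_in_cubic[OF cubic a]) auto
  then have "card F \<le> 3 * card {x \<in> VA - {a}. (v, x) \<in> S} + 1"
    unfolding seeds .
  moreover have "card F + card {x \<in> VA - {a}. (v, x) \<in> S} = card VA - 1"
    and "card VA > 0"
  proof -
    have "finite VA"
      by (rule finite_if_cubic[OF cubic])
    then have "card F + card {x \<in> VA - {a}. (v, x) \<in> S} = card (F \<union> {x \<in> VA - {a}. (v, x) \<in> S})"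
      by (intro card_Un_disjoint[symmetric]) (auto simp: F_def)
    also have "F \<union> {x \<in> VA - {a}. (v, x) \<in> S} = VA - {a}"
      by (auto simp: F_def)
    finally show "card F + card {x \<in> VA - {a}. (v, x) \<in> S} = card VA - 1"
      using a by simp
    show "card VA > 0"
      using a \<open>finite VA\<close> card_gt_0_iff by blast
  qed
  ultimately show ?thesis
    using card_VA by linarith
qed

lemma c2_comp_graph_ge:
  assumes "cubic VA EA" and "card VA = 4 * r" and comp: "is_comp_graph VG EG VA EA a H"
    and "finite VG"
  shows "card VG * r \<le> c2 (VG \<times> (VA - {a})) H"
proof (rule le_c2I)
  fix S
  assume conv: "is_2conv_set (VG \<times> (VA - {a})) H S"
  then have "S = (SIGMA v:VG. {x \<in> VA - {a}. (v, x) \<in> S})"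
    by (auto simp: is_2conv_set_def)
  then have "card S = card (SIGMA v:VG. {x \<in> VA - {a}. (v, x) \<in> S})"
    by (rule arg_cong)
  also have "\<dots> = (\<Sum>v\<in>VG. card {x \<in> VA - {a}. (v, x) \<in> S})"
    using \<open>finite VG\<close> finite_if_cubic[OF assms(1)] by (intro card_SigmaI) auto
  also have "\<dots> \<ge> (\<Sum>v\<in>VG. r)"
    using card_seeds_in_copy_ge[OF assms(1,2) comp conv] by (intro sum_mono) blast
  finally show "card VG * r \<le> card S"
    by simp
qed

lemma ceiling_comp_graph_order:
  assumes "r > 0"
  shows "\<lceil>(real (n * (4 * r - 1)) + 2) / 4\<rceil> = int (n * r) - \<lfloor>(real n - 2) / 4\<rfloor>"
proof -
  have "(real (n * (4 * r - 1)) + 2) / 4 = - ((real n - 2) / 4) + of_int (int (n * r))"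
    using assms by (simp add: of_nat_diff field_simps)
  then have "\<lceil>(real (n * (4 * r - 1)) + 2) / 4\<rceil> = - \<lfloor>(real n - 2) / 4\<rfloor> + int (n * r)"
    by (simp only: ceiling_add_of_int ceiling_minus)
  then show ?thesis
    by simp
qed

theorem proposition5p16:
  fixes VG :: "'g set" and EG :: "'g \<Rightarrow> 'g \<Rightarrow> bool"
    and VA :: "'b set" and EA :: "'b \<Rightarrow> 'b \<Rightarrow> bool"
    and a :: 'b and H :: "'g \<times> 'b \<Rightarrow> 'g \<times> 'b \<Rightarrow> bool"
    and n r :: nat
  assumes "cubic VG EG" and "card VG = n" and "n \<ge> 6"
    and "cubic VA EA" and "r > 0" and "card VA = 4 * r"
    and "is_comp_graph VG EG VA EA a H"
  shows "int (c2 (VG \<times> (VA - {a})) H)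
           - \<lceil>(real (card (VG \<times> (VA - {a}))) + 2) / 4\<rceil>
         \<ge> \<lfloor>(real n - 2) / 4\<rfloor>"
proof -
  have "finite VG"
    by (rule finite_if_cubic[OF assms(1)])
  then have "n * r \<le> c2 (VG \<times> (VA - {a})) H"
    using c2_comp_graph_ge[OF assms(4,6,7)] assms(2) by blast
  then have "int (n * r) \<le> int (c2 (VG \<times> (VA - {a})) H)"
    by (rule of_nat_mono)
  moreover have "a \<in> VA" and "finite VA"
    using assms(7) finite_if_cubic[OF assms(4)] by (simp_all add: is_comp_graph_def)
  then have "card (VG \<times> (VA - {a})) = n * (4 * r - 1)"
    using assms(2,6) by (simp add: card_cartesian_product)
  then have "\<lceil>(real (card (VG \<times> (VA - {a}))) + 2) / 4\<rceil> = int (n * r) - \<lfloor>(real n - 2) / 4\<rfloor>"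
    using ceiling_comp_graph_order[OF assms(5)] by simp
  ultimately show ?thesis
    by linarith
qed

end
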